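(* Let $n\ge 6$ and $0\le \tau\le n-5$, and let $\Gamma_{n,\tau}$ be the signed graph defined in the context. Then: (i) $\lambda_1(\Gamma_{n,\tau})\le \lambda_1(\Gamma_{n,0})=\lambda_1(\Gamma_{n,n-5})$, with equality if and only if $\tau\in\{0,n-5\}$; (ii) $\lambda_1(\Gamma_{n,0})>n-4$, and $\lambda_1(\Gamma_{n,0})$ equals the largest root of $\lambda^3-(n-6)\lambda^2-3(n-4)\lambda-n+3=0$.
   Context: A signed graph is a simple graph whose edges carry signs $\pm1$; its adjacency matrix has entry $\sigma(uv)$ for adjacent $u,v$ and $0$ otherwise, and $\lambda_1(\cdot)$ denotes the largest eigenvalue of this matrix. For integers $n\ge 6$ and $0\le\tau\le n-5$, $\Gamma_{n,\tau}$ is the signed graph with vertex set $\{v_1,v_2,v_3,v_5\}\cup X\cup Y$ (disjoint union), where $|X|=\tau$, $|Y|=n-4-\tau$, and $v_4\in Y$, whose edges are: $v_1v_2$ (the only negative edge); $v_2v_3$; $v_1v_5$; $v_1x$ for all $x\in X$; $v_5x$ for all $x\in X$; $v_5y$ and $v_3y$ for all $y\in Y$; and all edges among vertices of $X\cup Y$ (so $X\cup Y$ induces a complete graph). There are no other edges; in particular $v_2$ has degree $2$, $v_1$ has degree $\tau+2$, $v_3v_5$ is not an edge, and $v_1v_2v_3v_4v_5v_1$ is an induced cycle. All edges other than $v_1v_2$ are positive. *)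

theory Defs
  imports "Jordan_Normal_Form.Char_Poly"
begin

(* Largest eigenvalue of a real square matrix (for the symmetric adjacency
   matrices below all eigenvalues are real). *)
definition lambda1 :: "real mat \<Rightarrow> real" where
  "lambda1 A = Max {k. eigenvalue A k}"

(* Vertex labelling of Gamma_{n,tau} on {0..<n}:
   v1 = 0, v2 = 1, v3 = 2, v5 = 3,
   X = {4 ..< 4+tau}, Y = {4+tau ..< n}  (v4 is any element of Y). *)
definition Gam_sign :: "nat \<Rightarrow> nat \<Rightarrow> nat \<Rightarrow> nat \<Rightarrow> real" where
  "Gam_sign n \<tau> i j =
    (let inX = (\<lambda>x. 4 \<le> x \<and> x < 4 + \<tau>);
         inY = (\<lambda>y. 4 + \<tau> \<le> y \<and> y < n);
         inXY = (\<lambda>z. 4 \<le> z \<and> z < n);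
         adj = (\<lambda>a b. (a = 0 \<and> b = 1) \<or> (a = 1 \<and> b = 2) \<or> (a = 0 \<and> b = 3)
                     \<or> (a = 0 \<and> inX b) \<or> (a = 3 \<and> inX b)
                     \<or> (a = 3 \<and> inY b) \<or> (a = 2 \<and> inY b)
                     \<or> (inXY a \<and> inXY b \<and> a \<noteq> b))
     in if {i, j} = {0, 1} then -1
        else if adj i j \<or> adj j i then 1 else 0)"

definition Gamma_mat :: "nat \<Rightarrow> nat \<Rightarrow> real mat" where
  "Gamma_mat n \<tau> = mat n n (\<lambda>(i, j). Gam_sign n \<tau> i j)"

end

theory Submission
  imports Defs "Jordan_Normal_Form.Spectral_Radius"
begin

(* For k <> -1 an eigenvector of Gamma_{n,tau} is constant on X and on Y, since (k + 1) times
   its value at a vertex of X (resp. Y) is a sum that does not depend on the vertex. So the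
   eigenvalues k <> -1 are the eigenvalues of the 6 x 6 quotient matrix of the partition
   {v1}, {v2}, {v3}, {v5}, X, Y, i.e. the roots of
     (k + 1) (k^2 - k - 1) f(k) + tau (n - 5 - tau) k (k + 1) (2k + 1),
   where f is the cubic of the statement. For tau in {0, n - 5} the second term vanishes and
   lambda1 is the largest root of f, which exceeds n - 4 because f(n - 4) < 0. Otherwise the
   second term is positive for k > 0, while the first one is non-negative beyond the largest
   root of f, so no eigenvalue reaches it. *)

lemma finite_eigenvalues:
  fixes A :: "real mat"
  assumes "A \<in> carrier_mat m m"
  shows "finite {k. eigenvalue A k}"
  using card_finite_spectrum(1)[OF assms] unfolding spectrum_def by simp

lemma eigenvalue_le_lambda1:
  fixes A :: "real mat"
  assumes "A \<in> carrier_mat m m" and "eigenvalue A k"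
  shows "k \<le> lambda1 A"
  unfolding lambda1_def using finite_eigenvalues[OF assms(1)] assms(2) by simp

lemma eigenvalue_lambda1:
  fixes A :: "real mat"
  assumes "A \<in> carrier_mat m m" and "eigenvalue A k"
  shows "eigenvalue A (lambda1 A)"
  unfolding lambda1_def using Max_in[OF finite_eigenvalues[OF assms(1)]] assms(2) by auto

(* Q (a, b, c, d, x, y) = k (a, b, c, d, x, y) for the quotient matrix Q of the equitable
   partition {v1}, {v2}, {v3}, {v5}, X, Y with |X| = t and |Y| = s; x and y are the common
   values of an eigenvector on X and on Y. *)
definition quotient_eigen ::
    "real \<Rightarrow> real \<Rightarrow> real \<Rightarrow> real \<Rightarrow> real \<Rightarrow> real \<Rightarrow> real \<Rightarrow> real \<Rightarrow> real \<Rightarrow> bool" where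
  "quotient_eigen t s k a b c d x y \<longleftrightarrow>
     k * a = - b + d + t * x \<and> k * b = - a + c \<and> k * c = b + s * y \<and>
     k * d = a + t * x + s * y \<and> k * x = a + d + (t - 1) * x + s * y \<and>
     k * y = c + d + t * x + (s - 1) * y"

(* det (k I - Q), factored so as to isolate the term that vanishes for t = 0 and for s = 1. *)
definition quotient_charpoly :: "real \<Rightarrow> real \<Rightarrow> real \<Rightarrow> real" where
  "quotient_charpoly k t s =
     (k + 1) * (k ^ 3 - (t + s - 2) * k\<^sup>2 - 3 * (t + s) * k - (t + s) - 1) * (k\<^sup>2 - k - 1)
     + t * (s - 1) * k * (k + 1) * (2 * k + 1)"

(* Cramer's rule: the multipliers of the residuals r0, ..., r5 below are the rows of adj (k I - Q). *)
lemma quotient_eigen_trivial: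
  assumes eig: "quotient_eigen t s k a b c d x y" and P: "quotient_charpoly k t s \<noteq> 0"
  shows "a = 0 \<and> b = 0 \<and> c = 0 \<and> d = 0 \<and> x = 0 \<and> y = 0"
proof -
  define r0 where "r0 = k * a - (- b + d + t * x)"
  define r1 where "r1 = k * b - (- a + c)"
  define r2 where "r2 = k * c - (b + s * y)"
  define r3 where "r3 = k * d - (a + t * x + s * y)"
  define r4 where "r4 = k * x - (a + d + (t - 1) * x + s * y)"
  define r5 where "r5 = k * y - (c + d + t * x + (s - 1) * y)"
  have r: "r0 = 0" "r1 = 0" "r2 = 0" "r3 = 0" "r4 = 0" "r5 = 0"
    using eig by (simp_all add: quotient_eigen_def r0_def r1_def r2_def r3_def r4_def r5_def)
  let ?P = "quotient_charpoly k t s"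
  note defs = quotient_charpoly_def r0_def r1_def r2_def r3_def r4_def r5_def
  have "?P * a =
      (k^5 - k^4*t - k^4*s + 2*k^4 - 2*k^3*t - 3*k^3*s + k^2*t*s - k^2*s - 2*k^2 + k*t*s + 2*k*t + 2*k*s - k + t + s) * r0
    + (- (k^4) + k^3*t + k^3*s - 2*k^3 + 2*k^2*t + 3*k^2*s - k^2 + k*t + 3*k*s + s) * r1
    + (- (k^3) + k^2*t*s + k^2*t + 2*k^2*s - 2*k^2 + k*t*s + 2*k*t + 3*k*s - k + t + s) * r2
    + (k^4 - k^3*s + 2*k^3 - 2*k^2*s - k*s - 2*k - 1) * r3
    + (k^4*t - k^3*t*s + 2*k^3*t - 2*k^2*t*s - k*t*s - 2*k*t - t) * r4
    + (k^3*t*s + k^3*s + k^2*t*s - 2*k*s - s) * r5"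
    unfolding defs by (simp add: algebra_simps eval_nat_numeral)
  moreover have "?P * b =
      (- (k^4) + k^3*t + k^3*s - 2*k^3 + 2*k^2*t + 3*k^2*s - k^2 + k*t + 3*k*s + s) * r0
    + (k^5 - k^4*t - k^4*s + 2*k^4 - 3*k^3*t - 3*k^3*s + 2*k^2*t*s - 3*k^2*t - k^2*s - 2*k^2 + 3*k*t*s - k*t + 2*k*s - k + t*s + s) * r1
    + (k^4 - k^3*t - k^3*s + 2*k^3 - 3*k^2*t - 2*k^2*s - 3*k*t - k*s - 2*k - t - 1) * r2
    + (- (k^3) + 2*k^2*s - 2*k^2 + 3*k*s - k + s) * r3
    + (- (k^3)*t + 2*k^2*t*s - 2*k^2*t + 3*k*t*s - k*t + t*s) * r4
    + (k^3*s - 2*k^2*t*s - 3*k*t*s - 2*k*s - t*s - s) * r5"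
    unfolding defs by (simp add: algebra_simps eval_nat_numeral)
  moreover have "?P * c =
      (- (k^3) + k^2*t*s + k^2*t + 2*k^2*s - 2*k^2 + k*t*s + 2*k*t + 3*k*s - k + t + s) * r0
    + (k^4 - k^3*t - k^3*s + 2*k^3 - 3*k^2*t - 2*k^2*s - 3*k*t - k*s - 2*k - t - 1) * r1
    + (k^5 - k^4*t - k^4*s + 2*k^4 - 3*k^3*t - 2*k^3*s - k^3 + k^2*t*s - 2*k^2*t + k^2*s - 4*k^2 + k*t*s + k*t + 3*k*s - 2*k + t + s) * r2
    + (k^3*s + k^2*s - k^2 - 2*k - 1) * r3
    + (k^3*t*s + k^2*t*s - k^2*t - 2*k*t - t) * r4
    + (k^4*s - k^3*t*s + k^3*s - 2*k^2*t*s - 2*k^2*s - k*t*s - 3*k*s - s) * r5"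
    unfolding defs by (simp add: algebra_simps eval_nat_numeral)
  moreover have "?P * d =
      (k^4 - k^3*s + 2*k^3 - 2*k^2*s - k*s - 2*k - 1) * r0
    + (- (k^3) + 2*k^2*s - 2*k^2 + 3*k*s - k + s) * r1
    + (k^3*s + k^2*s - k^2 - 2*k - 1) * r2
    + (k^5 - k^4*t - k^4*s + 2*k^4 - 2*k^3*t - 2*k^3*s - k^3 + 2*k^2*t*s + k^2*t + k^2*s - 4*k^2 + k*t*s + 3*k*t + 3*k*s - 2*k + t + s) * r3
    + (k^4*t + 2*k^3*t - 2*k^2*t*s - k^2*t - k*t*s - 3*k*t - t) * r4
    + (k^4*s + k^3*s - 2*k^2*s - 3*k*s - s) * r5"
    unfolding defs by (simp add: algebra_simps eval_nat_numeral)
  moreover have "?P * x =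
      (k^4 - k^3*s + 2*k^3 - 2*k^2*s - k*s - 2*k - 1) * r0
    + (- (k^3) + 2*k^2*s - 2*k^2 + 3*k*s - k + s) * r1
    + (k^3*s + k^2*s - k^2 - 2*k - 1) * r2
    + (k^4 + 2*k^3 - 2*k^2*s - k^2 - k*s - 3*k - 1) * r3
    + (k^5 - k^4*s + k^4 - 2*k^3*s - 3*k^3 + 3*k^2*s - 3*k^2 + 4*k*s + k + s + 1) * r4
    + (k^4*s + k^3*s - 2*k^2*s - 3*k*s - s) * r5"
    unfolding defs by (simp add: algebra_simps eval_nat_numeral)
  moreover have "?P * y =
      (k^3*t + k^3 + k^2*t - 2*k - 1) * r0
    + (k^3 - 2*k^2*t - 3*k*t - 2*k - t - 1) * r1
    + (k^4 - k^3*t + k^3 - 2*k^2*t - 2*k^2 - k*t - 3*k - 1) * r2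
    + (k^4 + k^3 - 2*k^2 - 3*k - 1) * r3
    + (k^4*t + k^3*t - 2*k^2*t - 3*k*t - t) * r4
    + (k^5 - k^4*t + k^4 - 2*k^3*t - 3*k^3 + k^2*t - 3*k^2 + 3*k*t + k + t + 1) * r5"
    unfolding defs by (simp add: algebra_simps eval_nat_numeral)
  ultimately show ?thesis
    using P unfolding r by simp
qed

(* The witness is the column of adj (k I - Q) belonging to v5. *)
lemma quotient_eigen_exists:
  assumes P: "quotient_charpoly k t s = 0" and k: "k > 2"
  obtains a b c d x y where "quotient_eigen t s k a b c d x y" and "y \<noteq> 0"
proof
  let ?y = "k^4 + k^3 - 2*k^2 - 3*k - 1"
  show "quotient_eigen t s k
      (k^4 - k^3*s + 2*k^3 - 2*k^2*s - k*s - 2*k - 1)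
      (- (k^3) + 2*k^2*s - 2*k^2 + 3*k*s - k + s)
      (k^3*s + k^2*s - k^2 - 2*k - 1)
      (k^5 - k^4*t - k^4*s + 2*k^4 - 2*k^3*t - 2*k^3*s - k^3 + 2*k^2*t*s + k^2*t + k^2*s - 4*k^2
        + k*t*s + 3*k*t + 3*k*s - 2*k + t + s)
      (k^4 + 2*k^3 - 2*k^2*s - k^2 - k*s - 3*k - 1)
      ?y"
    using P unfolding quotient_eigen_def quotient_charpoly_def
    by (simp add: algebra_simps eval_nat_numeral)
  have "?y = k^3 * (k - 2) + 3 * k^2 * (k - 2) + 4 * k * (k - 2) + (5 * k - 1)"
    by (simp add: algebra_simps eval_nat_numeral)
  moreover have "0 < k^3 * (k - 2)" "0 < k^2 * (k - 2)" "0 < k * (k - 2)"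
    using k by simp_all
  ultimately show "?y \<noteq> 0"
    using k by linarith
qed

lemma golden_factor_pos:
  fixes k :: real
  assumes "k > 2"
  shows "k\<^sup>2 - k - 1 > 0"
proof -
  have "k\<^sup>2 - k - 1 = k * (k - 2) + (k - 1)"
    by (simp add: algebra_simps power2_eq_square)
  moreover have "k * (k - 2) > 0"
    using assms by simp
  ultimately show ?thesis
    using assms by linarith
qed

definition gamma_cubic :: "nat \<Rightarrow> real \<Rightarrow> real" where
  "gamma_cubic n x = x ^ 3 - (real n - 6) * x\<^sup>2 - 3 * (real n - 4) * x - real n + 3"

lemma gamma_cubic_at_n_minus_4: "gamma_cubic n (real n - 4) < 0"
proof -
  have "gamma_cubic n (real n - 4) = - ((real n - 4 + 1/2)\<^sup>2 + 3/4)"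
    by (simp add: gamma_cubic_def algebra_simps power2_eq_square power3_eq_cube)
  moreover have "(real n - 4 + 1/2)\<^sup>2 \<ge> 0"
    by simp
  ultimately show ?thesis
    by linarith
qed

lemma gamma_cubic_pos_beyond_n:
  assumes n: "n \<ge> 6" and x: "x \<ge> real n"
  shows "gamma_cubic n x > 0"
proof -
  have "gamma_cubic n x = x\<^sup>2 * (x - real n) + 3 * x * (x - real n) + 3 * x\<^sup>2 + 12 * x - real n + 3"
    by (simp add: gamma_cubic_def algebra_simps power2_eq_square power3_eq_cube)
  moreover have "x\<^sup>2 * (x - real n) \<ge> 0" "x * (x - real n) \<ge> 0" "x\<^sup>2 \<ge> 0"
    using n x by simp_all
  ultimately show ?thesis
    using n x by linarith
qed

lemma gamma_cubic_root_gt_n_minus_4: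
  assumes n: "n \<ge> 6"
  obtains \<rho> where "\<rho> > real n - 4" and "gamma_cubic n \<rho> = 0"
proof -
  have "continuous_on {real n - 4 .. real n} (gamma_cubic n)"
    unfolding gamma_cubic_def by (intro continuous_intros)
  then have "\<exists>\<rho> \<ge> real n - 4. \<rho> \<le> real n \<and> gamma_cubic n \<rho> = 0"
    using gamma_cubic_at_n_minus_4[of n] gamma_cubic_pos_beyond_n[OF n, of "real n"]
    by (intro IVT') auto
  then obtain \<rho> where "real n - 4 \<le> \<rho>" and root: "gamma_cubic n \<rho> = 0"
    by blast
  moreover have "\<rho> \<noteq> real n - 4"
    using gamma_cubic_at_n_minus_4[of n] root by auto
  ultimately have "\<rho> > real n - 4"
    by simp
  then show ?thesis
    using root by (rule that)
qed

lemma gamma_cubic_pos_beyond_roots: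
  assumes n: "n \<ge> 6" and roots: "\<forall>x. gamma_cubic n x = 0 \<longrightarrow> x \<le> L" and k: "k > L"
  shows "gamma_cubic n k > 0"
proof (cases "k \<ge> real n")
  case True
  then show ?thesis
    using gamma_cubic_pos_beyond_n[OF n] by simp
next
  case False
  show ?thesis
  proof (rule ccontr)
    assume "\<not> gamma_cubic n k > 0"
    moreover have "continuous_on {k .. real n} (gamma_cubic n)"
      unfolding gamma_cubic_def by (intro continuous_intros)
    ultimately have "\<exists>x \<ge> k. x \<le> real n \<and> gamma_cubic n x = 0"
      using False gamma_cubic_pos_beyond_n[OF n, of "real n"] by (intro IVT') auto
    with roots k show False
      by force
  qed
qed

lemma Gam_sign_col_X:
  "\<lbrakk>4 \<le> j; j < 4 + \<tau>; 4 + \<tau> < n; i < n\<rbrakk> \<Longrightarrow> Gam_sign n \<tau> i j =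
     (if i = 0 \<or> i = 3 then 1 else if i = 1 \<or> i = 2 then 0 else if j = i then 0 else 1)"
  by (auto simp: Gam_sign_def Let_def doubleton_eq_iff)

lemma Gam_sign_col_Y:
  "\<lbrakk>4 + \<tau> \<le> j; j < n; i < n\<rbrakk> \<Longrightarrow> Gam_sign n \<tau> i j =
     (if i = 2 \<or> i = 3 then 1 else if i = 0 \<or> i = 1 then 0 else if j = i then 0 else 1)"
  by (auto simp: Gam_sign_def Let_def doubleton_eq_iff)

lemma Gam_sign_cols_0123:
  assumes "i < n" and "4 + \<tau> < n"
  shows "Gam_sign n \<tau> i 0 = (if i = 1 then -1 else if i = 3 \<or> (4 \<le> i \<and> i < 4 + \<tau>) then 1 else 0)"
    and "Gam_sign n \<tau> i (Suc 0) = (if i = 0 then -1 else if i = 2 then 1 else 0)"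
    and "Gam_sign n \<tau> i 2 = (if i = 1 \<or> 4 + \<tau> \<le> i then 1 else 0)"
    and "Gam_sign n \<tau> i 3 = (if i = 0 \<or> 4 \<le> i then 1 else 0)"
  using assms by (auto simp: Gam_sign_def Let_def doubleton_eq_iff)

lemma Gamma_mat_carrier: "Gamma_mat n \<tau> \<in> carrier_mat n n"
  by (simp add: Gamma_mat_def)

lemma Gamma_mulv_nth:
  assumes n: "4 + \<tau> < n" and v: "v \<in> carrier_vec n" and i: "i < n"
  shows "(Gamma_mat n \<tau> *\<^sub>v v) $ i =
    (let SX = (\<Sum>j\<in>{4..<4+\<tau>}. v $ j); SY = (\<Sum>j\<in>{4+\<tau>..<n}. v $ j) in
     if i = 0 then - v $ 1 + v $ 3 + SX
     else if i = 1 then - v $ 0 + v $ 2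
     else if i = 2 then v $ 1 + SY
     else if i = 3 then v $ 0 + SX + SY
     else if i < 4 + \<tau> then v $ 0 + v $ 3 + SX + SY - v $ i
     else v $ 2 + v $ 3 + SX + SY - v $ i)"
proof -
  let ?g = "\<lambda>j. Gam_sign n \<tau> i j * v $ j"
  have "(Gamma_mat n \<tau> *\<^sub>v v) $ i = (\<Sum>j\<in>{0..<n}. ?g j)"
    using i v by (simp add: Gamma_mat_def scalar_prod_def row_def)
  also have "\<dots> = sum ?g {0..<4} + sum ?g {4..<4+\<tau>} + sum ?g {4+\<tau>..<n}"
    using n by (simp add: sum.atLeastLessThan_concat)
  also have "sum ?g {0..<4} = ?g 0 + ?g 1 + ?g 2 + ?g 3"
    by (simp add: numeral_eq_Suc)
  also have "sum ?g {4..<4+\<tau>} = (\<Sum>j\<in>{4..<4+\<tau>}.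
      if i = 0 \<or> i = 3 then v $ j else if i = 1 \<or> i = 2 then 0 else if j = i then 0 else v $ j)"
    using n i by (intro sum.cong) (auto simp: Gam_sign_col_X)
  also have "sum ?g {4+\<tau>..<n} = (\<Sum>j\<in>{4+\<tau>..<n}.
      if i = 2 \<or> i = 3 then v $ j else if i = 0 \<or> i = 1 then 0 else if j = i then 0 else v $ j)"
    using n i by (intro sum.cong) (auto simp: Gam_sign_col_Y)
  finally show ?thesis
    using i n by (auto simp: Let_def Gam_sign_cols_0123 sum.delta_remove sum_diff1)
qed

definition block_vec :: "nat \<Rightarrow> nat \<Rightarrow> real \<Rightarrow> real \<Rightarrow> real \<Rightarrow> real \<Rightarrow> real \<Rightarrow> real \<Rightarrow> real vec" where
  "block_vec n \<tau> a b c d x y = vec n (\<lambda>i.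
     if i = 0 then a else if i = 1 then b else if i = 2 then c else if i = 3 then d
     else if i < 4 + \<tau> then x else y)"

lemma block_vec_carrier [simp]: "block_vec n \<tau> a b c d x y \<in> carrier_vec n"
  by (simp add: block_vec_def)

lemma block_vec_zero: "block_vec n \<tau> 0 0 0 0 0 0 = 0\<^sub>v n"
  by (auto simp: block_vec_def)

lemma smult_block_vec:
  "k \<cdot>\<^sub>v block_vec n \<tau> a b c d x y = block_vec n \<tau> (k * a) (k * b) (k * c) (k * d) (k * x) (k * y)"
  by (auto simp: block_vec_def)

lemma Gamma_mulv_block_vec:
  assumes n: "4 + \<tau> < n"
  defines "t \<equiv> real \<tau>" and "s \<equiv> real (n - 4 - \<tau>)"
  shows "Gamma_mat n \<tau> *\<^sub>v block_vec n \<tau> a b c d x y =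
    block_vec n \<tau> (- b + d + t * x) (- a + c) (b + s * y) (a + t * x + s * y)
      (a + d + (t - 1) * x + s * y) (c + d + t * x + (s - 1) * y)"
proof (rule eq_vecI)
  let ?w = "block_vec n \<tau> a b c d x y"
  let ?u = "block_vec n \<tau> (- b + d + t * x) (- a + c) (b + s * y) (a + t * x + s * y)
    (a + d + (t - 1) * x + s * y) (c + d + t * x + (s - 1) * y)"
  have SX: "(\<Sum>j\<in>{4..<4+\<tau>}. ?w $ j) = t * x"
    using n by (simp add: t_def block_vec_def)
  have SY: "(\<Sum>j\<in>{4+\<tau>..<n}. ?w $ j) = s * y"
    using n by (simp add: s_def block_vec_def)
  fix i assume "i < dim_vec ?u"
  then have i: "i < n"
    by (simp add: block_vec_def)
  show "(Gamma_mat n \<tau> *\<^sub>v ?w) $ i = ?u $ i"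
    using Gamma_mulv_nth[OF n block_vec_carrier[of n \<tau> a b c d x y] i] i n unfolding Let_def SX SY
    by (auto simp: block_vec_def algebra_simps)
qed (simp add: Gamma_mat_def block_vec_def)

lemma Gamma_mulv_block_vec_eigen:
  assumes "4 + \<tau> < n"
    and "quotient_eigen (real \<tau>) (real (n - 4 - \<tau>)) k a b c d x y"
  shows "Gamma_mat n \<tau> *\<^sub>v block_vec n \<tau> a b c d x y = k \<cdot>\<^sub>v block_vec n \<tau> a b c d x y"
  using assms by (simp add: Gamma_mulv_block_vec smult_block_vec quotient_eigen_def)

lemma Gamma_eigenvector_block_vec:
  assumes n: "4 + \<tau> < n" and v: "v \<in> carrier_vec n"
    and ev: "Gamma_mat n \<tau> *\<^sub>v v = k \<cdot>\<^sub>v v" and k: "k \<noteq> -1"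
  obtains x y where "v = block_vec n \<tau> (v $ 0) (v $ 1) (v $ 2) (v $ 3) x y"
    and "quotient_eigen (real \<tau>) (real (n - 4 - \<tau>)) k (v $ 0) (v $ 1) (v $ 2) (v $ 3) x y"
proof -
  define SX where "SX = (\<Sum>j\<in>{4..<4+\<tau>}. v $ j)"
  define SY where "SY = (\<Sum>j\<in>{4+\<tau>..<n}. v $ j)"
  define x where "x = (v $ 0 + v $ 3 + SX + SY) / (k + 1)"
  define y where "y = (v $ 2 + v $ 3 + SX + SY) / (k + 1)"
  have k1: "k + 1 \<noteq> 0"
    using k by linarith
  have row: "k * v $ i = (Gamma_mat n \<tau> *\<^sub>v v) $ i" if "i < n" for i
    using ev v that by simp
  have vX: "v $ i = x" if "4 \<le> i" "i < 4 + \<tau>" for i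
  proof -
    have "k * v $ i = v $ 0 + v $ 3 + SX + SY - v $ i"
      using row[of i] Gamma_mulv_nth[OF n v, of i] that n by (simp add: SX_def SY_def)
    then show ?thesis
      using k1 by (simp add: x_def field_simps)
  qed
  have vY: "v $ i = y" if "4 + \<tau> \<le> i" "i < n" for i
  proof -
    have "k * v $ i = v $ 2 + v $ 3 + SX + SY - v $ i"
      using row[of i] Gamma_mulv_nth[OF n v, of i] that n by (simp add: SX_def SY_def)
    then show ?thesis
      using k1 by (simp add: y_def field_simps)
  qed
  have block: "v = block_vec n \<tau> (v $ 0) (v $ 1) (v $ 2) (v $ 3) x y"
    using v vX vY by (intro eq_vecI) (auto simp: block_vec_def)
  have "SX = real \<tau> * x" "SY = real (n - 4 - \<tau>) * y"
    using vX vY by (simp_all add: SX_def SY_def)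
  moreover have "(k + 1) * x = v $ 0 + v $ 3 + SX + SY" "(k + 1) * y = v $ 2 + v $ 3 + SX + SY"
    using k1 by (simp_all add: x_def y_def)
  moreover have "k * v $ 0 = - v $ 1 + v $ 3 + SX" "k * v $ 1 = - v $ 0 + v $ 2"
    "k * v $ 2 = v $ 1 + SY" "k * v $ 3 = v $ 0 + SX + SY"
    using row[of 0] row[of 1] row[of 2] row[of 3] Gamma_mulv_nth[OF n v] n
    by (simp_all add: SX_def SY_def)
  ultimately have "quotient_eigen (real \<tau>) (real (n - 4 - \<tau>)) k (v $ 0) (v $ 1) (v $ 2) (v $ 3) x y"
    by (simp add: quotient_eigen_def algebra_simps)
  with block show ?thesis
    by (rule that)
qed

lemma quotient_charpoly_Gamma:
  assumes "4 + \<tau> < n"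
  shows "quotient_charpoly k (real \<tau>) (real (n - 4 - \<tau>)) =
    (k + 1) * gamma_cubic n k * (k\<^sup>2 - k - 1) + real \<tau> * (real n - 5 - real \<tau>) * k * (k + 1) * (2 * k + 1)"
proof -
  have "real (n - 4 - \<tau>) = real n - 4 - real \<tau>"
    using assms by auto
  then show ?thesis
    by (simp add: quotient_charpoly_def gamma_cubic_def algebra_simps)
qed

lemma eigenvalue_Gamma_imp_charpoly_root:
  assumes n: "4 + \<tau> < n" and ev: "eigenvalue (Gamma_mat n \<tau>) k" and k: "k \<noteq> -1"
  shows "quotient_charpoly k (real \<tau>) (real (n - 4 - \<tau>)) = 0"
proof (rule ccontr)
  assume P: "quotient_charpoly k (real \<tau>) (real (n - 4 - \<tau>)) \<noteq> 0"
  obtain v where v: "v \<in> carrier_vec n" "v \<noteq> 0\<^sub>v n" "Gamma_mat n \<tau> *\<^sub>v v = k \<cdot>\<^sub>v v"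
    using ev unfolding eigenvalue_def eigenvector_def by (auto simp: Gamma_mat_def)
  obtain x y where block: "v = block_vec n \<tau> (v $ 0) (v $ 1) (v $ 2) (v $ 3) x y"
    and eig: "quotient_eigen (real \<tau>) (real (n - 4 - \<tau>)) k (v $ 0) (v $ 1) (v $ 2) (v $ 3) x y"
    using Gamma_eigenvector_block_vec[OF n v(1,3) k] .
  have "v = 0\<^sub>v n"
    using quotient_eigen_trivial[OF eig P] block by (simp add: block_vec_zero)
  with v(2) show False ..
qed

lemma charpoly_root_imp_eigenvalue_Gamma:
  assumes n: "4 + \<tau> < n" and P: "quotient_charpoly k (real \<tau>) (real (n - 4 - \<tau>)) = 0"
    and k: "k > 2"
  shows "eigenvalue (Gamma_mat n \<tau>) k"
proof -
  obtain a b c d x y where eig: "quotient_eigen (real \<tau>) (real (n - 4 - \<tau>)) k a b c d x y"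
    and y: "y \<noteq> 0"
    using quotient_eigen_exists[OF P k] .
  let ?w = "block_vec n \<tau> a b c d x y"
  have "?w $ (n - 1) = y"
    using n by (auto simp: block_vec_def)
  then have "?w \<noteq> 0\<^sub>v n"
    using n y by auto
  then show ?thesis
    using Gamma_mulv_block_vec_eigen[OF n eig] unfolding eigenvalue_def eigenvector_def
    by (intro exI[of _ ?w]) (simp add: Gamma_mat_def)
qed

lemma eigenvalue_Gamma_minus_one:
  assumes n: "5 + \<tau> < n"
  shows "eigenvalue (Gamma_mat n \<tau>) (-1)"
proof -
  define v :: "real vec" where "v = vec n (\<lambda>j. if j = 4 + \<tau> then 1 else if j = 5 + \<tau> then -1 else 0)"
  have v: "v \<in> carrier_vec n"
    by (simp add: v_def)
  have SX: "(\<Sum>j\<in>{4..<4+\<tau>}. v $ j) = 0"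
    using n by (intro sum.neutral) (auto simp: v_def)
  have "(\<Sum>j\<in>{4+\<tau>..<n}. v $ j)
      = (\<Sum>j\<in>{4+\<tau>..<n}. (if j = 4 + \<tau> then 1 else 0) - (if j = 5 + \<tau> then 1 else 0))"
    by (rule sum.cong) (auto simp: v_def)
  also have "\<dots> = 0"
    using n by (simp add: sum_subtractf sum.delta)
  finally have SY: "(\<Sum>j\<in>{4+\<tau>..<n}. v $ j) = 0" .
  have "Gamma_mat n \<tau> *\<^sub>v v = (-1) \<cdot>\<^sub>v v"
  proof (rule eq_vecI)
    fix i assume "i < dim_vec ((-1::real) \<cdot>\<^sub>v v)"
    then have i: "i < n"
      using v by simp
    show "(Gamma_mat n \<tau> *\<^sub>v v) $ i = ((-1) \<cdot>\<^sub>v v) $ i"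
      using Gamma_mulv_nth[of \<tau> n v i] SX SY i n v unfolding Let_def
      by (cases "i < 4") (auto simp: v_def)
  qed (simp add: Gamma_mat_def v_def)
  moreover have "v $ (4 + \<tau>) = 1"
    using n by (simp add: v_def)
  then have "v \<noteq> 0\<^sub>v n"
    using n by auto
  ultimately show ?thesis
    using v unfolding eigenvalue_def eigenvector_def by (auto simp: Gamma_mat_def)
qed

lemma eigenvalue_Gamma_endpoint_iff:
  assumes n: "n \<ge> 6" and \<tau>: "\<tau> \<in> {0, n - 5}" and k: "k > 2"
  shows "eigenvalue (Gamma_mat n \<tau>) k \<longleftrightarrow> gamma_cubic n k = 0"
proof -
  have n4: "4 + \<tau> < n"
    using n \<tau> by auto
  have "real \<tau> * (real n - 5 - real \<tau>) = 0"
    using n \<tau> by (auto simp: of_nat_diff)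
  then have "quotient_charpoly k (real \<tau>) (real (n - 4 - \<tau>)) = (k + 1) * (k\<^sup>2 - k - 1) * gamma_cubic n k"
    unfolding quotient_charpoly_Gamma[OF n4] by simp
  moreover have "(k + 1) * (k\<^sup>2 - k - 1) \<noteq> 0"
    using golden_factor_pos[OF k] k by simp
  ultimately show ?thesis
    using eigenvalue_Gamma_imp_charpoly_root[OF n4, of k] charpoly_root_imp_eigenvalue_Gamma[OF n4 _ k] k
    by auto
qed

lemma lambda1_Gamma_endpoint:
  assumes n: "n \<ge> 6" and \<tau>: "\<tau> \<in> {0, n - 5}"
  shows "gamma_cubic n (lambda1 (Gamma_mat n \<tau>)) = 0"
    and "lambda1 (Gamma_mat n \<tau>) > real n - 4"
    and "\<forall>x. gamma_cubic n x = 0 \<longrightarrow> x \<le> lambda1 (Gamma_mat n \<tau>)"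
proof -
  let ?L = "lambda1 (Gamma_mat n \<tau>)"
  note eig_iff = eigenvalue_Gamma_endpoint_iff[OF n \<tau>]
  obtain \<rho> where \<rho>: "\<rho> > real n - 4" "gamma_cubic n \<rho> = 0"
    using gamma_cubic_root_gt_n_minus_4[OF n] .
  have \<rho>2: "\<rho> > 2"
    using \<rho> n by simp
  then have ev: "eigenvalue (Gamma_mat n \<tau>) \<rho>"
    using eig_iff \<rho> by simp
  then have \<rho>L: "\<rho> \<le> ?L"
    by (rule eigenvalue_le_lambda1[OF Gamma_mat_carrier])
  then show "?L > real n - 4"
    using \<rho> by linarith
  have "eigenvalue (Gamma_mat n \<tau>) ?L"
    using eigenvalue_lambda1[OF Gamma_mat_carrier ev] .
  then show "gamma_cubic n ?L = 0"
    using eig_iff \<rho>L \<rho>2 by simp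
  show "\<forall>x. gamma_cubic n x = 0 \<longrightarrow> x \<le> ?L"
  proof (intro allI impI)
    fix x assume root: "gamma_cubic n x = 0"
    show "x \<le> ?L"
    proof (cases "x > 2")
      case True
      then show ?thesis
        using eig_iff root eigenvalue_le_lambda1[OF Gamma_mat_carrier] by blast
    next
      case False
      then show ?thesis
        using \<rho>L \<rho>2 by simp
    qed
  qed
qed

lemma lambda1_Gamma_interior_less:
  assumes n: "n \<ge> 6" and \<tau>: "0 < \<tau>" "\<tau> < n - 5"
  shows "lambda1 (Gamma_mat n \<tau>) < lambda1 (Gamma_mat n 0)"
proof -
  let ?L0 = "lambda1 (Gamma_mat n 0)"
  have n4: "4 + \<tau> < n"
    using \<tau> by linarith
  note L0 = lambda1_Gamma_endpoint[OF n, of 0]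
  have "k < ?L0" if ev: "eigenvalue (Gamma_mat n \<tau>) k" for k
  proof (rule ccontr)
    assume "\<not> k < ?L0"
    then have kL: "?L0 \<le> k"
      by simp
    have k: "k > 2"
      using kL L0(2) n by simp
    have "gamma_cubic n k \<ge> 0"
      using gamma_cubic_pos_beyond_roots[OF n L0(3), of k] L0(1) kL by (cases "k = ?L0") auto
    then have "(k + 1) * gamma_cubic n k * (k\<^sup>2 - k - 1) \<ge> 0"
      using golden_factor_pos[OF k] k by simp
    moreover have "real \<tau> * (real n - 5 - real \<tau>) * k * (k + 1) * (2 * k + 1) > 0"
      using \<tau> k by (simp add: less_diff_conv of_nat_diff[symmetric])
    ultimately have "quotient_charpoly k (real \<tau>) (real (n - 4 - \<tau>)) > 0"
      unfolding quotient_charpoly_Gamma[OF n4] by linarith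
    then show False
      using eigenvalue_Gamma_imp_charpoly_root[OF n4 ev] k by simp
  qed
  \<comment> \<open>the eigenvalue -1 only serves to make the set in the definition of lambda1 non-empty\<close>
  moreover have "eigenvalue (Gamma_mat n \<tau>) (lambda1 (Gamma_mat n \<tau>))"
    using \<tau> by (intro eigenvalue_lambda1[OF Gamma_mat_carrier eigenvalue_Gamma_minus_one]) linarith
  ultimately show ?thesis
    by blast
qed

theorem lemma2p2:
  fixes n \<tau> :: nat
  assumes "n \<ge> 6" and "\<tau> \<le> n - 5"
  shows "lambda1 (Gamma_mat n \<tau>) \<le> lambda1 (Gamma_mat n 0)
       \<and> lambda1 (Gamma_mat n 0) = lambda1 (Gamma_mat n (n - 5))
       \<and> (lambda1 (Gamma_mat n \<tau>) = lambda1 (Gamma_mat n 0) \<longleftrightarrow> \<tau> \<in> {0, n - 5})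
       \<and> lambda1 (Gamma_mat n 0) > real n - 4
       \<and> (let f = (\<lambda>x::real. x ^ 3 - (real n - 6) * x\<^sup>2 - 3 * (real n - 4) * x - real n + 3)
          in f (lambda1 (Gamma_mat n 0)) = 0 \<and> (\<forall>x. f x = 0 \<longrightarrow> x \<le> lambda1 (Gamma_mat n 0)))"
proof -
  let ?L = "\<lambda>\<tau>. lambda1 (Gamma_mat n \<tau>)"
  note L0 = lambda1_Gamma_endpoint[OF assms(1), of 0]
  note L5 = lambda1_Gamma_endpoint[OF assms(1), of "n - 5"]
  have ends_eq: "?L 0 = ?L (n - 5)"
    using L0(1,3) L5(1,3) by (simp add: order_antisym)
  have interior: "?L \<tau> < ?L 0" if "\<tau> \<notin> {0, n - 5}"
    using lambda1_Gamma_interior_less[OF assms(1)] that assms(2) by simp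
  have "?L \<tau> = ?L 0" if "\<tau> \<in> {0, n - 5}"
    using that ends_eq by auto
  with interior have "?L \<tau> \<le> ?L 0" "?L \<tau> = ?L 0 \<longleftrightarrow> \<tau> \<in> {0, n - 5}"
    by force+
  with ends_eq L0 show ?thesis
    unfolding Let_def gamma_cubic_def[symmetric] by blast
qed

end
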